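(* Let $n$ be a positive integer, $k\ge2$ an integer, and $\beta,\alpha_0,\alpha_1,\dots,\alpha_n$ non-negative integers with $0\le\beta\le k-1$. Then $$\det_{0\le i,j\le n-1}\bigl(C_{(k-1)\alpha_i+j+\beta,k}+C_{(k-1)\alpha_{i+1}+j+\beta,k}\bigr)=\prod_{0\le i<j\le n}(\alpha_j-\alpha_i)\prod_{i=0}^{n-1}\frac{((k-1)i+\beta+n)!}{(ki+\beta)!}\prod_{i=0}^{n}\frac{(k\alpha_i+\beta)!}{\alpha_i!\,((k-1)\alpha_i+\beta+n)!}\times\sum_{s=0}^{n}\frac{\alpha_s!\,((k-1)\alpha_s+\beta+n)!}{(k\alpha_s+\beta)!\prod_{j=0}^{s-1}(\alpha_s-\alpha_j)\prod_{j=s+1}^{n}(\alpha_j-\alpha_s)}.$$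
   Context: For integers $k\ge2$ and $m\ge0$, the generalised Catalan number is $$C_{m,k}=\frac{m-(k-1)\lfloor\frac{m}{k-1}\rfloor+1}{m+\lfloor\frac{m}{k-1}\rfloor+1}\binom{m+\lfloor\frac{m}{k-1}\rfloor+1}{m+1}.$$ *)

theory Defs
  imports Main "HOL.Real" "Jordan_Normal_Form.Determinant"
begin

definition gen_catalan :: "nat \<Rightarrow> nat \<Rightarrow> real" where
  "gen_catalan m k =
     (let q = m div (k - 1) in
       (real (m - (k - 1) * q) + 1) / (real (m + q) + 1) * real ((m + q + 1) choose (m + 1)))"

end

theory Submission
  imports Defs
begin

text \<open>
Writing \<open>m = (k-1) q + r\<close> with \<open>r < k-1\<close>, the Catalan number \<open>C(m,k)\<close> is the ballot-type
number \<open>B(q,r) = (r+1) (kq+r)! / (q! ((k-1)q+r+1)!)\<close>. The recurrence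
\<open>B(a+1,s+1) = B(a+1,s) + B(a,s+k)\<close> shows that \<open>C((k-1)a+t,k) - B(a,t)\<close> is a linear
combination of the \<open>B(a,s)\<close> with \<open>k-1 \<le> s < t\<close>, so unitriangular column operations replace
the Catalan entries \<open>C((k-1)a+j+\<beta>,k)\<close> by \<open>B(a,\<beta>+j)\<close>. Since \<open>B(a,\<beta>+j) = w(a) Q_j(a)\<close> for
polynomials \<open>Q_j\<close> of degree \<open>< n\<close>, that determinant is \<open>\<Prod> w(a_i)\<close> times a Vandermonde
determinant times the determinant of the coefficient matrix of the \<open>Q_j\<close>, which is found by
evaluating the \<open>Q_j\<close> at nodes where the evaluation matrix is triangular.
A determinant whose rows are sums of adjacent rows of an \<open>(n+1) \<times> n\<close> array equals a bordered
\<open>(n+1) \<times> (n+1)\<close> determinant; its Laplace expansion along the border is the sum of the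
determinants with one row deleted, and each of these is evaluated by the formula above.
\<close>

section \<open>Triangular and Vandermonde determinants\<close>

lemma mat_mult_mat_square:
  "mat n n f * mat n n g = mat n n (\<lambda>(i,j). \<Sum>s<n. f (i,s) * g (s,j))"
  by (rule eq_matI) (auto simp: scalar_prod_def row_def col_def lessThan_atLeast0 intro!: sum.cong)

lemma det_mat_upper_triangular:
  assumes "\<And>i j. j < i \<Longrightarrow> i < n \<Longrightarrow> f (i,j) = 0"
  shows "det (mat n n f) = (\<Prod>i<n. f (i,i))"
proof -
  have "upper_triangular (mat n n f)" using assms by (auto simp: upper_triangular_def)
  then have "det (mat n n f) = prod_list (diag_mat (mat n n f))"
    by (rule det_upper_triangular) auto
  also have "\<dots> = (\<Prod>i<n. f (i,i))"
    by (simp add: diag_mat_def prod.list_conv_set_nth lessThan_atLeast0 cong: map_cong)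
  finally show ?thesis .
qed

lemma det_mat_lower_triangular:
  assumes "\<And>i j. i < j \<Longrightarrow> j < n \<Longrightarrow> f (i,j) = 0"
  shows "det (mat n n f) = (\<Prod>i<n. f (i,i))"
proof -
  have "det (mat n n f) = prod_list (diag_mat (mat n n f))"
    by (rule det_lower_triangular[of n]) (use assms in auto)
  also have "\<dots> = (\<Prod>i<n. f (i,i))"
    by (simp add: diag_mat_def prod.list_conv_set_nth lessThan_atLeast0 cong: map_cong)
  finally show ?thesis .
qed

definition vandermonde_mat :: "nat \<Rightarrow> (nat \<Rightarrow> real) \<Rightarrow> real mat" where
  "vandermonde_mat n x = mat n n (\<lambda>(i,m). x i ^ m)"

definition coeff_mat :: "nat \<Rightarrow> (nat \<Rightarrow> real poly) \<Rightarrow> real mat" where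
  "coeff_mat n p = mat n n (\<lambda>(m,j). coeff (p j) m)"

lemma poly_eq_sum_lessThan:
  fixes p :: "real poly"
  assumes "degree p < n"
  shows "poly p x = (\<Sum>m<n. x ^ m * coeff p m)"
proof -
  have "poly p x = (\<Sum>i\<le>degree p. coeff p i * x ^ i)" by (rule poly_altdef)
  also have "\<dots> = (\<Sum>m<n. coeff p m * x ^ m)"
    by (rule sum.mono_neutral_left) (use assms in \<open>auto simp: coeff_eq_0\<close>)
  finally show ?thesis by (simp add: mult.commute)
qed

lemma det_poly_eval_mat:
  fixes p :: "nat \<Rightarrow> real poly" and x :: "nat \<Rightarrow> real"
  assumes "\<And>j. j < n \<Longrightarrow> degree (p j) < n"
  shows "det (mat n n (\<lambda>(i,j). poly (p j) (x i))) = det (vandermonde_mat n x) * det (coeff_mat n p)"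
proof -
  have "mat n n (\<lambda>(i,j). poly (p j) (x i)) = vandermonde_mat n x * coeff_mat n p"
    unfolding vandermonde_mat_def coeff_mat_def mat_mult_mat_square
    by (rule eq_matI) (auto simp: poly_eq_sum_lessThan[OF assms])
  then show ?thesis
    by (simp add: det_mult[of _ n] vandermonde_mat_def coeff_mat_def)
qed

definition newton_poly :: "(nat \<Rightarrow> real) \<Rightarrow> nat \<Rightarrow> real poly" where
  "newton_poly x j = (\<Prod>m<j. [:- x m, 1:])"

lemma lead_coeff_newton_poly: "lead_coeff (newton_poly x j) = 1"
  unfolding newton_poly_def lead_coeff_prod by simp

lemma degree_newton_poly: "degree (newton_poly x j) = j"
  unfolding newton_poly_def by (subst degree_prod_sum_eq) auto

lemma det_vandermonde_mat: "det (vandermonde_mat n x) = (\<Prod>i<n. \<Prod>m<i. x i - x m)"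
proof -
  have "det (coeff_mat n (newton_poly x)) = 1"
    unfolding coeff_mat_def
    by (subst det_mat_upper_triangular)
      (auto simp: coeff_eq_0 degree_newton_poly lead_coeff_newton_poly[of x, unfolded degree_newton_poly])
  moreover have "det (mat n n (\<lambda>(i,j). poly (newton_poly x j) (x i))) = (\<Prod>i<n. \<Prod>m<i. x i - x m)"
    by (subst det_mat_lower_triangular) (auto simp: newton_poly_def poly_prod)
  ultimately show ?thesis
    using det_poly_eval_mat[of n "newton_poly x" x] by (simp add: degree_newton_poly)
qed

section \<open>Ballot numbers and the generalised Catalan numbers\<close>

definition ballot :: "nat \<Rightarrow> nat \<Rightarrow> nat \<Rightarrow> real" where
  "ballot k q r = real (r+1) * fact (k*q+r) / (fact q * fact ((k-1)*q+r+1))"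

lemma gen_catalan_eq_ballot:
  assumes "k \<ge> 2"
  shows "gen_catalan m k = ballot k (m div (k-1)) (m mod (k-1))"
proof -
  obtain c where k: "k = Suc c" using assms by (cases k) auto
  define q where "q = m div c"
  define r where "r = m mod c"
  have m: "m = c*q + r" unfolding q_def r_def by simp
  have binom: "real ((m + q + 1) choose (m + 1)) = fact (Suc c * q + r + 1) / (fact (m+1) * fact q)"
  proof -
    have "m + q + 1 = Suc c * q + r + 1" "Suc c * q + r + 1 - (m+1) = q" using m by simp_all
    moreover have "real ((Suc c*q+r+1) choose (m+1))
        = fact (Suc c*q+r+1) / (fact (m+1) * fact (Suc c*q+r+1 - (m+1)))"
      by (rule binomial_fact) (use m in simp)
    ultimately show ?thesis by (simp only:)
  qed
  have "m - c*q = r" using m by simp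
  then have "gen_catalan m k
      = (real r + 1) / (real (m+q) + 1) * (fact (Suc c * q + r + 1) / (fact (m+1) * fact q))"
    unfolding gen_catalan_def Let_def k diff_Suc_1 q_def[symmetric] binom by (simp only:)
  also have "\<dots> = ballot k q r"
  proof -
    have f1: "fact (Suc c * q + r + 1) = real (Suc c * q + r + 1) * (fact (Suc c * q + r) :: real)"
      and f2: "fact (m + 1) = real (m+1) * (fact m :: real)"
      and f3: "fact (c*q+r + 1) = real (c*q+r+1) * (fact (c*q+r) :: real)"
      by (simp_all only: Suc_eq_plus1[symmetric] fact_Suc)
    have mq: "real (m+q) + 1 = real (Suc (Suc c * q + r))" using m by simp
    show ?thesis
      unfolding ballot_def k diff_Suc_1 f1 f2 mq f3 unfolding m Suc_eq_plus1
      by (simp add: field_simps del: of_nat_add of_nat_Suc) (simp add: algebra_simps)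
  qed
  finally show ?thesis unfolding k q_def r_def by simp
qed

lemma ballot_Suc_Suc:
  assumes "k \<ge> 1"
  shows "ballot k (a+1) (Suc s) = ballot k (a+1) s + ballot k a (s+k)"
proof -
  obtain c where k: "k = Suc c" using assms by (cases k) auto
  define X where "X = Suc c * a + Suc c + s"
  define Y where "Y = c * a + Suc c + s"
  have e1: "Suc c * (a+1) + Suc s = Suc X" and e2: "c * (a+1) + Suc s + 1 = Suc Y"
    and e3: "Suc c * (a+1) + s = X" and e4: "c * (a+1) + s + 1 = Y"
    and e5: "Suc c * a + (s + Suc c) = X" and e6: "c * a + (s + Suc c) + 1 = Suc Y"
    unfolding X_def Y_def by simp_all
  have b1: "ballot k (a+1) (Suc s)
      = real (s+2) * (real (Suc X) * fact X) / ((real (Suc a) * fact a) * (real (Suc Y) * fact Y))"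
    unfolding ballot_def k diff_Suc_1 e1 e2 by (simp add: Suc_eq_plus1[symmetric])
  have b2: "ballot k (a+1) s = real (s+1) * fact X / ((real (Suc a) * fact a) * fact Y)"
    unfolding ballot_def k diff_Suc_1 e3 e4 by (simp add: Suc_eq_plus1[symmetric])
  have b3: "ballot k a (s+k) = real (s+k+1) * fact X / (fact a * (real (Suc Y) * fact Y))"
    unfolding ballot_def k diff_Suc_1 e5 e6 by (simp add: Suc_eq_plus1[symmetric])
  have "real (s+2) * real (Suc X) = real (s+1) * real (Suc Y) + real (s+k+1) * real (Suc a)"
    unfolding X_def Y_def k by (simp add: algebra_simps)
  then have "real (s+2) * (real (Suc X) * fact X) / ((real (Suc a) * fact a) * (real (Suc Y) * fact Y))
     = (real (s+1) * real (Suc Y) + real (s+k+1) * real (Suc a)) * fact X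
         / ((real (Suc a) * fact a) * (real (Suc Y) * fact Y))"
    by (simp add: mult.assoc[symmetric])
  also have "\<dots> = real (s+1) * fact X / ((real (Suc a) * fact a) * fact Y)
                 + real (s+k+1) * fact X / (fact a * (real (Suc Y) * fact Y))"
    by (simp add: field_simps del: of_nat_Suc of_nat_add)
  finally show ?thesis unfolding b1 b2 b3 .
qed

lemma ballot_Suc_0:
  assumes "k \<ge> 1"
  shows "ballot k (a+1) 0 = ballot k a (k-1)"
proof -
  obtain c where k: "k = Suc c" using assms by (cases k) auto
  have "fact (Suc (Suc c * a + c)) = real (Suc c) * real (Suc a) * (fact (Suc c * a + c) :: real)"
    by (simp only: fact_Suc) (simp add: algebra_simps)
  then show ?thesis
    unfolding ballot_def k by (simp add: field_simps del: of_nat_Suc of_nat_add fact_Suc)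
      (simp add: algebra_simps)
qed

text \<open>By \<open>ballot_Suc_0\<close> and \<open>ballot_Suc_Suc\<close>, every \<open>ballot k (a+1) s\<close> expands into values
  \<open>ballot k a t\<close> with \<open>t \<ge> k - 1\<close>; hence the lower summation bound.\<close>

definition ballot_span :: "nat \<Rightarrow> nat \<Rightarrow> (nat \<Rightarrow> real) set" where
  "ballot_span k m = {f. \<exists>c. \<forall>a. f a = (\<Sum>s\<in>{k-1..<m}. c s * ballot k a s)}"

lemma ballot_span_zero: "(\<lambda>a. 0) \<in> ballot_span k m"
  unfolding ballot_span_def by (rule CollectI, rule exI[of _ "\<lambda>_. 0"]) simp

lemma ballot_span_add:
  assumes "f \<in> ballot_span k m" "g \<in> ballot_span k m"
  shows "(\<lambda>a. f a + g a) \<in> ballot_span k m"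
proof -
  obtain c d where "\<And>a. f a = (\<Sum>s\<in>{k-1..<m}. c s * ballot k a s)"
    "\<And>a. g a = (\<Sum>s\<in>{k-1..<m}. d s * ballot k a s)"
    using assms unfolding ballot_span_def by blast
  then show ?thesis
    unfolding ballot_span_def
    by (intro CollectI exI[of _ "\<lambda>s. c s + d s"]) (simp add: sum.distrib distrib_right)
qed

lemma ballot_span_mult:
  assumes "f \<in> ballot_span k m"
  shows "(\<lambda>a. r * f a) \<in> ballot_span k m"
proof -
  obtain c where "\<And>a. f a = (\<Sum>s\<in>{k-1..<m}. c s * ballot k a s)"
    using assms unfolding ballot_span_def by blast
  then show ?thesis
    unfolding ballot_span_def
    by (intro CollectI exI[of _ "\<lambda>s. r * c s"]) (simp add: sum_distrib_left mult.assoc)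
qed

lemma ballot_span_sum:
  "finite S \<Longrightarrow> (\<And>s. s \<in> S \<Longrightarrow> g s \<in> ballot_span k m) \<Longrightarrow> (\<lambda>a. \<Sum>s\<in>S. g s a) \<in> ballot_span k m"
  by (induction S rule: finite_induct) (auto simp: ballot_span_zero ballot_span_add)

lemma ballot_in_ballot_span:
  assumes "k - 1 \<le> t" "t < m"
  shows "(\<lambda>a. ballot k a t) \<in> ballot_span k m"
proof -
  have "ballot k a t = (\<Sum>s\<in>{k-1..<m}. of_bool (s = t) * ballot k a s)" for a
    using assms by simp
  then show ?thesis unfolding ballot_span_def by (intro CollectI exI allI)
qed

lemma ballot_span_mono:
  assumes "f \<in> ballot_span k m" "m \<le> m'"
  shows "f \<in> ballot_span k m'"
proof -
  obtain c where c: "\<And>a. f a = (\<Sum>s\<in>{k-1..<m}. c s * ballot k a s)"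
    using assms(1) unfolding ballot_span_def by blast
  have "(\<lambda>a. \<Sum>s\<in>{k-1..<m}. c s * ballot k a s) \<in> ballot_span k m'"
    by (intro ballot_span_sum ballot_span_mult ballot_in_ballot_span) (use assms(2) in auto)
  moreover have "f = (\<lambda>a. \<Sum>s\<in>{k-1..<m}. c s * ballot k a s)" by (rule ext) (rule c)
  ultimately show ?thesis by simp
qed

lemma ballot_Suc_in_ballot_span:
  assumes "k \<ge> 1"
  shows "(\<lambda>a. ballot k (a+1) s) \<in> ballot_span k (s+k)"
proof (induction s)
  case 0
  show ?case
    using ballot_Suc_0[OF assms] ballot_in_ballot_span[of k "k-1" "0+k"] assms by simp
next
  case (Suc s)
  have "(\<lambda>a. ballot k (a+1) s) \<in> ballot_span k (Suc s + k)"
    by (rule ballot_span_mono[OF Suc]) simp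
  moreover have "(\<lambda>a. ballot k a (s+k)) \<in> ballot_span k (Suc s + k)"
    by (rule ballot_in_ballot_span) auto
  ultimately show ?case using ballot_span_add ballot_Suc_Suc[OF assms] by simp
qed

lemma ballot_span_shift:
  assumes "k \<ge> 1" and "f \<in> ballot_span k m"
  shows "(\<lambda>a. f (a+1)) \<in> ballot_span k (m+k-1)"
proof -
  obtain c where c: "\<And>a. f a = (\<Sum>s\<in>{k-1..<m}. c s * ballot k a s)"
    using assms(2) unfolding ballot_span_def by blast
  have "(\<lambda>a. \<Sum>s\<in>{k-1..<m}. c s * ballot k (a+1) s) \<in> ballot_span k (m+k-1)"
  proof (rule ballot_span_sum)
    fix s assume "s \<in> {k-1..<m}"
    then have "(\<lambda>a. ballot k (a+1) s) \<in> ballot_span k (m+k-1)"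
      by (intro ballot_span_mono[OF ballot_Suc_in_ballot_span[OF assms(1)]]) auto
    then show "(\<lambda>a. c s * ballot k (a+1) s) \<in> ballot_span k (m+k-1)"
      by (rule ballot_span_mult)
  qed simp
  then show ?thesis using c by simp
qed

lemma ballot_add_minus_ballot_in_ballot_span:
  assumes "k \<ge> 1"
  shows "(\<lambda>a. ballot k (a+u) v - ballot k a (v + u*(k-1))) \<in> ballot_span k (v + u*(k-1))"
proof (induction u)
  case 0
  then show ?case using ballot_span_zero by simp
next
  case (Suc u)
  define t where "t = v + u*(k-1)"
  have "(\<lambda>a. ballot k (a+1+u) v - ballot k (a+1) t) \<in> ballot_span k (t+k-1)"
    using ballot_span_shift[OF assms Suc[folded t_def]] by simp
  moreover have "(\<lambda>a. ballot k (a+1) t - ballot k a (t+k-1)) \<in> ballot_span k (t+k-1)"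
  proof (cases t)
    case 0
    then show ?thesis using ballot_Suc_0[OF assms] ballot_span_zero by simp
  next
    case (Suc t')
    have "ballot k (a+1) t - ballot k a (t+k-1) = ballot k (a+1) t'" for a
      using ballot_Suc_Suc[OF assms, of a t'] Suc assms by simp
    then show ?thesis using ballot_Suc_in_ballot_span[OF assms, of t'] Suc assms by simp
  qed
  moreover have "v + Suc u * (k-1) = t + k - 1" unfolding t_def using assms by simp
  ultimately show ?case using ballot_span_add by (fastforce simp: algebra_simps)
qed

lemma gen_catalan_minus_ballot_in_ballot_span:
  assumes "k \<ge> 2"
  shows "(\<lambda>a. gen_catalan ((k-1)*a + t) k - ballot k a t) \<in> ballot_span k t"
proof -
  have "gen_catalan ((k-1)*a + t) k = ballot k (a + t div (k-1)) (t mod (k-1))" for a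
    using gen_catalan_eq_ballot[OF assms, of "(k-1)*a + t"] assms by simp
  moreover have "t mod (k-1) + t div (k-1) * (k-1) = t" by (rule mod_div_mult_eq)
  ultimately show ?thesis
    using ballot_add_minus_ballot_in_ballot_span[of k "t div (k-1)" "t mod (k-1)"] assms by simp
qed

section \<open>The determinant of generalised Catalan numbers\<close>

lemma sum_unitriangular_column:
  fixes h C :: "nat \<Rightarrow> real"
  assumes "\<beta> \<le> k - 1" and "j < n"
  shows "(\<Sum>s<n. h (\<beta>+s) * (if s = j then 1 else if s < j \<and> k-1 \<le> \<beta>+s then C (\<beta>+s) else 0))
       = h (\<beta>+j) + (\<Sum>s\<in>{k-1..<\<beta>+j}. C s * h s)"
proof -
  have "(\<Sum>s<n. h (\<beta>+s) * (if s = j then 1 else if s < j \<and> k-1 \<le> \<beta>+s then C (\<beta>+s) else 0))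
      = (\<Sum>s<n. (if s = j then h (\<beta>+j) else 0)
                + (if s < j \<and> k-1 \<le> \<beta>+s then C (\<beta>+s) * h (\<beta>+s) else 0))"
    by (rule sum.cong) auto
  also have "\<dots> = h (\<beta>+j) + (\<Sum>s\<in>{s. s < j \<and> k-1 \<le> \<beta>+s}. C (\<beta>+s) * h (\<beta>+s))"
  proof -
    have "(\<Sum>s<n. (if s < j \<and> k-1 \<le> \<beta>+s then C (\<beta>+s) * h (\<beta>+s) else 0))
        = (\<Sum>s\<in>{s. s < j \<and> k-1 \<le> \<beta>+s}. C (\<beta>+s) * h (\<beta>+s))"
      by (rule sum.mono_neutral_cong_right) (use assms(2) in auto)
    then show ?thesis using assms(2) by (simp add: sum.distrib sum.delta)
  qed
  also have "(\<Sum>s\<in>{s. s < j \<and> k-1 \<le> \<beta>+s}. C (\<beta>+s) * h (\<beta>+s)) = (\<Sum>s\<in>{k-1..<\<beta>+j}. C s * h s)"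
    by (rule sum.reindex_bij_witness[of _ "\<lambda>s. s - \<beta>" "\<lambda>s. \<beta> + s"]) (use assms(1) in auto)
  finally show ?thesis .
qed

text \<open>Column \<open>j\<close> minus \<open>ballot k a (\<beta>+j)\<close> is a combination of the columns \<open>ballot k a s\<close>
  with \<open>k - 1 \<le> s < \<beta>+j\<close>, which are earlier columns because \<open>\<beta> \<le> k - 1\<close>.\<close>

lemma det_gen_catalan_mat_eq_det_ballot_mat:
  assumes k: "k \<ge> 2" and \<beta>: "\<beta> \<le> k - 1"
  shows "det (mat n n (\<lambda>(i,j). gen_catalan ((k-1)*a i + j + \<beta>) k))
       = det (mat n n (\<lambda>(i,j). ballot k (a i) (\<beta>+j)))"
proof -
  have "\<forall>j. \<exists>c. \<forall>x. gen_catalan ((k-1)*x + (\<beta>+j)) k - ballot k x (\<beta>+j)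
                      = (\<Sum>s\<in>{k-1..<\<beta>+j}. c s * ballot k x s)"
    using gen_catalan_minus_ballot_in_ballot_span[OF k] unfolding ballot_span_def by blast
  then obtain C where C: "\<And>j x. gen_catalan ((k-1)*x + (\<beta>+j)) k - ballot k x (\<beta>+j)
                              = (\<Sum>s\<in>{k-1..<\<beta>+j}. C j s * ballot k x s)"
    by metis
  define T where "T = (\<lambda>(s,j). if s = j then 1 else if s < j \<and> k-1 \<le> \<beta>+s then C j (\<beta>+s) else (0::real))"
  have "gen_catalan ((k-1)*a i + j + \<beta>) k = (\<Sum>s<n. ballot k (a i) (\<beta>+s) * T (s,j))"
    if "j < n" for i j
  proof -
    have "(\<Sum>s<n. ballot k (a i) (\<beta>+s) * T (s,j))
        = ballot k (a i) (\<beta>+j) + (\<Sum>s\<in>{k-1..<\<beta>+j}. C j s * ballot k (a i) s)"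
      unfolding T_def using sum_unitriangular_column[OF \<beta> that, of "ballot k (a i)" "C j"] by simp
    also have "\<dots> = gen_catalan ((k-1)*a i + j + \<beta>) k"
      using C[where j=j and x="a i"] by (simp add: add_ac)
    finally show ?thesis by simp
  qed
  then have "mat n n (\<lambda>(i,j). gen_catalan ((k-1)*a i + j + \<beta>) k)
      = mat n n (\<lambda>(i,j). ballot k (a i) (\<beta>+j)) * mat n n T"
    unfolding mat_mult_mat_square by (intro eq_matI) auto
  moreover have "det (mat n n T) = 1"
    by (subst det_mat_upper_triangular) (auto simp: T_def)
  ultimately show ?thesis by (simp add: det_mult[of _ n])
qed

lemma fact_add_eq_prod: "fact (m+d) = (fact m :: real) * (\<Prod>p<d. real (m+1+p))"
  by (induction d) (simp_all add: algebra_simps)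

lemma fact_add_eq_prod_rev: "fact (m+d) = (fact m :: real) * (\<Prod>p<d. real (m+d-p))"
proof -
  have "(\<Prod>p<d. real (m+d-p)) = (\<Prod>p<d. real (m+1+(d - Suc p)))"
    by (rule prod.cong) auto
  also have "\<dots> = (\<Prod>p<d. real (m+1+p))" by (rule prod.nat_diff_reindex)
  finally show ?thesis using fact_add_eq_prod by simp
qed

definition row_factor :: "nat \<Rightarrow> nat \<Rightarrow> nat \<Rightarrow> nat \<Rightarrow> real" where
  "row_factor k \<beta> n a = fact (k*a+\<beta>) / (fact a * fact ((k-1)*a+\<beta>+n))"

definition ballot_poly :: "nat \<Rightarrow> nat \<Rightarrow> nat \<Rightarrow> nat \<Rightarrow> real poly" where
  "ballot_poly k \<beta> n j = smult (real (\<beta>+j+1))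
     ((\<Prod>p<j. [:real (\<beta>+j-p), real k:]) * (\<Prod>p<n-j-1. [:real (\<beta>+j+2+p), real (k-1):]))"

lemma degree_ballot_poly:
  assumes "j < n"
  shows "degree (ballot_poly k \<beta> n j) < n"
proof -
  have "degree (\<Prod>p<j. [:real (\<beta>+j-p), real k:]) \<le> j"
    by (rule order.trans[OF degree_prod_sum_le]) (auto intro: order.trans[OF sum_mono[of _ "\<lambda>_. 1"]])
  moreover have "degree (\<Prod>p<n-j-1. [:real (\<beta>+j+2+p), real (k-1):]) \<le> n-j-1"
    by (rule order.trans[OF degree_prod_sum_le]) (auto intro: order.trans[OF sum_mono[of _ "\<lambda>_. 1"]])
  ultimately have "degree ((\<Prod>p<j. [:real (\<beta>+j-p), real k:])
                         * (\<Prod>p<n-j-1. [:real (\<beta>+j+2+p), real (k-1):])) \<le> j + (n-j-1)"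
    using degree_mult_le add_mono order.trans by blast
  moreover have "degree (ballot_poly k \<beta> n j) \<le> degree ((\<Prod>p<j. [:real (\<beta>+j-p), real k:])
                         * (\<Prod>p<n-j-1. [:real (\<beta>+j+2+p), real (k-1):]))"
    unfolding ballot_poly_def by (rule degree_smult_le)
  ultimately show ?thesis using assms by simp
qed

lemma ballot_eq_row_factor_poly:
  assumes "k \<ge> 1" and "j < n"
  shows "ballot k a (\<beta>+j) = row_factor k \<beta> n a * poly (ballot_poly k \<beta> n j) (real a)"
proof -
  obtain c where kc: "k = Suc c" using assms(1) by (cases k) auto
  define P1 where "P1 = (\<Prod>p<j. real (k*a+\<beta>+j-p))"
  define P2 where "P2 = (\<Prod>p<n-j-1. real ((k-1)*a+\<beta>+j+1+1+p))"
  have f1: "fact (k*a+(\<beta>+j)) = fact (k*a+\<beta>) * P1"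
    unfolding P1_def using fact_add_eq_prod_rev[of "k*a+\<beta>" j] by (simp add: add_ac)
  have f2: "fact ((k-1)*a+\<beta>+n) = fact ((k-1)*a+(\<beta>+j)+1) * P2"
    unfolding P2_def using fact_add_eq_prod[of "(k-1)*a+(\<beta>+j)+1" "n-j-1"] assms(2)
    by (simp add: add_ac)
  have "P2 > 0" unfolding P2_def by (rule prod_pos) (simp del: of_nat_add add: of_nat_0_less_iff)
  have poly1: "poly (\<Prod>p<j. [:real (\<beta>+j-p), real k:]) (real a) = P1"
    unfolding P1_def poly_prod by (rule prod.cong) (auto simp: of_nat_diff algebra_simps)
  have poly2: "poly (\<Prod>p<n-j-1. [:real (\<beta>+j+2+p), real (k-1):]) (real a) = P2"
    unfolding P2_def poly_prod kc by (rule prod.cong) (auto simp: algebra_simps)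
  have "poly (ballot_poly k \<beta> n j) (real a) = real (\<beta>+j+1) * P1 * P2"
    unfolding ballot_poly_def poly_smult poly_mult poly1 poly2 by simp
  moreover have "ballot k a (\<beta>+j)
      = real (\<beta>+j+1) * (fact (k*a+\<beta>) * P1) / (fact a * fact ((k-1)*a+(\<beta>+j)+1))"
    by (simp only: ballot_def f1)
  moreover have "row_factor k \<beta> n a = fact (k*a+\<beta>) / (fact a * (fact ((k-1)*a+(\<beta>+j)+1) * P2))"
    by (simp only: row_factor_def f2)
  moreover have "\<And>r X A F P1 P2 :: real. F \<noteq> 0 \<Longrightarrow> A \<noteq> 0 \<Longrightarrow> P2 \<noteq> 0 \<Longrightarrow>
      r * (X * P1) / (A * F) = X / (A * (F * P2)) * (r * P1 * P2)"
    by (simp add: field_simps)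
  ultimately show ?thesis using \<open>P2 > 0\<close> by simp
qed

lemma det_ballot_mat:
  assumes "k \<ge> 1"
  shows "det (mat n n (\<lambda>(i,j). ballot k (a i) (\<beta>+j)))
       = (\<Prod>i<n. row_factor k \<beta> n (a i))
         * det (vandermonde_mat n (\<lambda>i. real (a i))) * det (coeff_mat n (ballot_poly k \<beta> n))"
proof -
  have "ballot k (a i) (\<beta>+j) = (\<Sum>s<n. (if i = s then row_factor k \<beta> n (a i) else 0)
                                            * poly (ballot_poly k \<beta> n j) (real (a s)))"
    if "i < n" "j < n" for i j
  proof -
    have "(\<Sum>s<n. (if i = s then row_factor k \<beta> n (a i) else 0) * poly (ballot_poly k \<beta> n j) (real (a s)))
      = (\<Sum>s<n. if i = s then row_factor k \<beta> n (a i) * poly (ballot_poly k \<beta> n j) (real (a i)) else 0)"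
      by (rule sum.cong) auto
    then show ?thesis using that ballot_eq_row_factor_poly[OF assms that(2)] by (simp add: sum.delta)
  qed
  then have "mat n n (\<lambda>(i,j). ballot k (a i) (\<beta>+j))
      = mat n n (\<lambda>(i,j). if i = j then row_factor k \<beta> n (a i) else 0)
        * mat n n (\<lambda>(i,j). poly (ballot_poly k \<beta> n j) (real (a i)))"
    unfolding mat_mult_mat_square by (intro eq_matI) auto
  moreover have "det (mat n n (\<lambda>(i,j). if i = j then row_factor k \<beta> n (a i) else 0))
      = (\<Prod>i<n. row_factor k \<beta> n (a i))"
    by (subst det_mat_upper_triangular) auto
  moreover have "det (mat n n (\<lambda>(i,j). poly (ballot_poly k \<beta> n j) (real (a i))))
      = det (vandermonde_mat n (\<lambda>i. real (a i))) * det (coeff_mat n (ballot_poly k \<beta> n))"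
    by (rule det_poly_eval_mat) (rule degree_ballot_poly)
  ultimately show ?thesis by (simp add: det_mult[of _ n])
qed

definition catalan_det_const :: "nat \<Rightarrow> nat \<Rightarrow> nat \<Rightarrow> real" where
  "catalan_det_const k \<beta> n = (\<Prod>q<n. fact ((k-1)*q+\<beta>+n) / fact (k*q+\<beta>))"

lemma catalan_det_const_Suc:
  "catalan_det_const (Suc c) \<beta> (Suc n)
     = catalan_det_const (Suc c) \<beta> n * (real (\<beta>+n+1) * (\<Prod>p<n. real (\<beta>+n+Suc c+c*p)))"
proof -
  have e1: "fact (c*q+\<beta>+Suc n) = real (c*q+\<beta>+n+1) * (fact (c*q+\<beta>+n) :: real)" for q
    by (simp only: add_Suc_right fact_Suc) simp
  have e2: "fact (c*n+\<beta>+Suc n) = real (Suc c*n+\<beta>+1) * (fact (Suc c*n+\<beta>) :: real)"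
  proof -
    have "c*n+\<beta>+Suc n = Suc (Suc c*n+\<beta>)" by simp
    then show ?thesis by (simp only: fact_Suc) simp
  qed
  have "catalan_det_const (Suc c) \<beta> (Suc n)
      = (\<Prod>q<n. real (c*q+\<beta>+n+1) * (fact (c*q+\<beta>+n) / fact (Suc c*q+\<beta>)))
        * (real (c*n+\<beta>+n+1) * (fact (c*n+\<beta>+n) / fact (Suc c*n+\<beta>)))"
    unfolding catalan_det_const_def diff_Suc_1 prod.lessThan_Suc e1
    by (simp only: mult.assoc times_divide_eq_right)
  also have "\<dots> = catalan_det_const (Suc c) \<beta> n * ((\<Prod>q<n. real (c*q+\<beta>+n+1)) * real (Suc c*n+\<beta>+1))"
  proof -
    have "Suc c*n+\<beta> = c*n+\<beta>+n" by simp
    then have "fact (c*n+\<beta>+n) / fact (Suc c*n+\<beta>) = (1::real)" by (simp only:) simp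
    then show ?thesis unfolding catalan_det_const_def diff_Suc_1 prod.distrib
      by (simp only: mult_1_right) (simp add: algebra_simps)
  qed
  also have "(\<Prod>q<n. real (c*q+\<beta>+n+1)) * real (Suc c*n+\<beta>+1)
           = real (\<beta>+n+1) * (\<Prod>p<n. real (\<beta>+n+Suc c+c*p))"
  proof (cases n)
    case 0
    then show ?thesis by simp
  next
    case (Suc m)
    have "(\<Prod>q<n. real (c*q+\<beta>+n+1)) = real (\<beta>+n+1) * (\<Prod>q<m. real (c*Suc q+\<beta>+n+1))"
      unfolding Suc prod.lessThan_Suc_shift by simp
    moreover have "(\<Prod>p<n. real (\<beta>+n+Suc c+c*p))
        = (\<Prod>p<m. real (\<beta>+n+Suc c+c*p)) * real (\<beta>+n+Suc c+c*m)"
      unfolding Suc prod.lessThan_Suc by simp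
    moreover have "(\<Prod>q<m. real (c*Suc q+\<beta>+n+1)) = (\<Prod>p<m. real (\<beta>+n+Suc c+c*p))"
      by (rule prod.cong) (auto simp: algebra_simps)
    moreover have "real (Suc c*n+\<beta>+1) = real (\<beta>+n+Suc c+c*m)"
      using Suc by (simp add: algebra_simps)
    ultimately show ?thesis by (simp add: algebra_simps)
  qed
  finally show ?thesis .
qed

lemma prod_eq_catalan_det_const:
  "(\<Prod>i<n. real (\<beta>+i+1) * (\<Prod>p<i. real (\<beta>+i+Suc c+c*p))) = catalan_det_const (Suc c) \<beta> n"
proof (induction n)
  case 0
  then show ?case by (simp add: catalan_det_const_def)
next
  case (Suc n)
  then show ?case by (simp add: catalan_det_const_Suc)
qed

text \<open>At the nodes \<open>x\<^sub>i = -(\<beta>+i+1)/(k-1)\<close> the factor \<open>(\<beta>+j+2+p) + (k-1) x\<close> of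
  \<open>ballot_poly k \<beta> n j\<close> with \<open>p = i-j-1\<close> vanishes, so the evaluation matrix at the nodes is
  upper triangular.\<close>

definition ballot_node :: "nat \<Rightarrow> nat \<Rightarrow> nat \<Rightarrow> real" where
  "ballot_node k \<beta> i = - real (\<beta>+i+1) / real (k-1)"

lemma poly_ballot_poly_node_eq_0:
  assumes "k \<ge> 2" and "j < i" and "i < n"
  shows "poly (ballot_poly k \<beta> n j) (ballot_node k \<beta> i) = 0"
proof -
  have "poly [:real (\<beta>+j+2+(i-j-1)), real (k-1):] (ballot_node k \<beta> i) = 0"
    using assms by (simp add: ballot_node_def field_simps)
  moreover have "i - j - 1 \<in> {..<n-j-1}" using assms by simp
  ultimately have "poly (\<Prod>p<n-j-1. [:real (\<beta>+j+2+p), real (k-1):]) (ballot_node k \<beta> i) = 0"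
    unfolding poly_prod by (intro prod_zero) blast+
  then show ?thesis unfolding ballot_poly_def by simp
qed

lemma poly_ballot_poly_node_diag:
  assumes "k = Suc c" and "c \<ge> 1" and "i < n"
  shows "poly (ballot_poly k \<beta> n i) (ballot_node k \<beta> i)
       = (\<Prod>m<i. ballot_node k \<beta> i - ballot_node k \<beta> m)
         * (real (\<beta>+i+1) * fact (n-i-1) * (\<Prod>p<i. real (\<beta>+i+Suc c+c*p)) / fact i)"
proof -
  have cpos: "real c > 0" using assms(2) by simp
  have nodes: "(\<Prod>m<i. ballot_node k \<beta> i - ballot_node k \<beta> m) = (\<Prod>p<i. - real (p+1) / real c)"
  proof -
    have "(\<Prod>m<i. ballot_node k \<beta> i - ballot_node k \<beta> m)
        = (\<Prod>p<i. ballot_node k \<beta> i - ballot_node k \<beta> (i - Suc p))"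
      by (rule prod.nat_diff_reindex[symmetric])
    also have "\<dots> = (\<Prod>p<i. - real (p+1) / real c)"
      by (rule prod.cong) (use cpos in \<open>auto simp: ballot_node_def assms(1) of_nat_diff field_simps\<close>)
    finally show ?thesis .
  qed
  have low: "poly (\<Prod>p<i. [:real (\<beta>+i-p), real k:]) (ballot_node k \<beta> i)
      = (\<Prod>p<i. (- real (p+1) / real c) * (real (\<beta>+i+Suc c+c*p) / real (p+1)))"
  proof -
    have "poly [:real (\<beta>+i-p), real k:] (ballot_node k \<beta> i)
        = (- real (p+1) / real c) * (real (\<beta>+i+Suc c+c*p) / real (p+1))" if "p < i" for p
    proof -
      have "real (\<beta>+i-p) = real \<beta> + real i - real p" using that by (simp add: of_nat_diff)
      then have "poly [:real (\<beta>+i-p), real k:] (ballot_node k \<beta> i) = - real (\<beta>+i+Suc c+c*p) / real c"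
        using cpos unfolding ballot_node_def assms(1) by (simp add: field_simps)
      then show ?thesis by (simp del: of_nat_add of_nat_Suc)
    qed
    then show ?thesis unfolding poly_prod by (intro prod.cong) auto
  qed
  have high: "poly (\<Prod>p<n-i-1. [:real (\<beta>+i+2+p), real (k-1):]) (ballot_node k \<beta> i) = fact (n-i-1)"
  proof -
    have "poly (\<Prod>p<n-i-1. [:real (\<beta>+i+2+p), real (k-1):]) (ballot_node k \<beta> i)
        = (\<Prod>p<n-i-1. real (0+1+p))"
      unfolding poly_prod
      by (rule prod.cong) (use cpos in \<open>auto simp: ballot_node_def assms(1) field_simps\<close>)
    then show ?thesis using fact_add_eq_prod[of 0 "n-i-1"] by simp
  qed
  have "(\<Prod>p<i. real (p+1)) = fact i" using fact_add_eq_prod[of 0 i] by simp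
  then show ?thesis
    unfolding ballot_poly_def poly_smult poly_mult low high prod.distrib prod_dividef nodes
    by simp
qed

lemma det_coeff_mat_ballot_poly:
  assumes "k \<ge> 2"
  shows "det (coeff_mat n (ballot_poly k \<beta> n)) = catalan_det_const k \<beta> n"
proof -
  obtain c where k: "k = Suc c" and c: "c \<ge> 1" using assms by (cases k) auto
  define x where "x = ballot_node k \<beta>"
  define g where "g = (\<lambda>i. real (\<beta>+i+1) * fact (n-i-1) * (\<Prod>p<i. real (\<beta>+i+Suc c+c*p)) / fact i)"
  have "det (mat n n (\<lambda>(i,j). poly (ballot_poly k \<beta> n j) (x i)))
      = (\<Prod>i<n. poly (ballot_poly k \<beta> n i) (x i))"
    by (subst det_mat_upper_triangular) (auto simp: x_def poly_ballot_poly_node_eq_0[OF assms])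
  also have "\<dots> = det (vandermonde_mat n x) * (\<Prod>i<n. g i)"
    unfolding det_vandermonde_mat prod.distrib[symmetric] x_def g_def
    by (intro prod.cong refl poly_ballot_poly_node_diag[OF k c]) simp
  finally have "det (vandermonde_mat n x) * det (coeff_mat n (ballot_poly k \<beta> n))
              = det (vandermonde_mat n x) * (\<Prod>i<n. g i)"
    using det_poly_eval_mat[of n "ballot_poly k \<beta> n" x, OF degree_ballot_poly] by simp
  moreover have "det (vandermonde_mat n x) \<noteq> 0"
    unfolding det_vandermonde_mat using c by (auto simp: x_def ballot_node_def k field_simps)
  ultimately have "det (coeff_mat n (ballot_poly k \<beta> n)) = (\<Prod>i<n. g i)" by simp
  also have "\<dots> = (\<Prod>i<n. fact (n-i-1)) / (\<Prod>i<n. fact i)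
                 * (\<Prod>i<n. real (\<beta>+i+1) * (\<Prod>p<i. real (\<beta>+i+Suc c+c*p)))"
    unfolding g_def prod.distrib prod_dividef by (simp add: field_simps)
  also have "(\<Prod>i<n. fact (n-i-1)) = (\<Prod>i<n. (fact i :: real))"
    using prod.nat_diff_reindex[of "\<lambda>i. fact i :: real" n] by simp
  finally show ?thesis unfolding k prod_eq_catalan_det_const by simp
qed

lemma det_gen_catalan_mat:
  assumes "k \<ge> 2" and "\<beta> \<le> k - 1"
  shows "det (mat n n (\<lambda>(i,j). gen_catalan ((k-1)*a i + j + \<beta>) k))
       = (\<Prod>i<n. row_factor k \<beta> n (a i)) * (\<Prod>i<n. \<Prod>m<i. real (a i) - real (a m))
         * catalan_det_const k \<beta> n"
  using assms det_gen_catalan_mat_eq_det_ballot_mat det_ballot_mat[where n=n and a=a and \<beta>=\<beta>]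
    det_vandermonde_mat det_coeff_mat_ballot_poly by simp

section \<open>Sums of adjacent rows\<close>

abbreviation skip :: "nat \<Rightarrow> nat \<Rightarrow> nat" where
  "skip s i \<equiv> if i < s then i else Suc i"

definition bordered_mat :: "nat \<Rightarrow> (nat \<times> nat \<Rightarrow> real) \<Rightarrow> real mat" where
  "bordered_mat n F = mat (Suc n) (Suc n) (\<lambda>(i,j). if j = 0 then (-1)^i else F (i, j-1))"

lemma det_bordered_mat_eq_sum:
  "det (bordered_mat n F) = (\<Sum>s\<le>n. det (mat n n (\<lambda>(i,j). F (skip s i, j))))"
proof -
  let ?A = "bordered_mat n F"
  have A: "?A \<in> carrier_mat (Suc n) (Suc n)" unfolding bordered_mat_def by auto
  have "det ?A = (\<Sum>i<Suc n. ?A $$ (i,0) * cofactor ?A i 0)"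
    by (rule laplace_expansion_column[OF A]) simp
  also have "\<dots> = (\<Sum>i<Suc n. det (mat_delete ?A i 0))"
    by (rule sum.cong) (auto simp: bordered_mat_def cofactor_def simp flip: power_add)
  also have "\<dots> = (\<Sum>s\<le>n. det (mat n n (\<lambda>(i,j). F (skip s i, j))))"
  proof (rule sum.cong)
    fix s
    have "mat_delete ?A s 0 = mat n n (\<lambda>(i,j). F (skip s i, j))"
      by (rule eq_matI) (auto simp: mat_delete_def bordered_mat_def)
    then show "det (mat_delete ?A s 0) = det (mat n n (\<lambda>(i,j). F (skip s i, j)))" by simp
  qed auto
  finally show ?thesis .
qed

definition adjacent_sum_mat :: "nat \<Rightarrow> real mat" where
  "adjacent_sum_mat n = mat (Suc n) (Suc n) (\<lambda>(i,j). if j = i \<or> j = i+1 then 1 else 0)"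

lemma det_adjacent_sum_mat: "det (adjacent_sum_mat n) = 1"
  unfolding adjacent_sum_mat_def by (subst det_mat_upper_triangular) auto

lemma adjacent_sum_mat_mult_index:
  assumes "A \<in> carrier_mat (Suc n) (Suc n)" "i < Suc n" "j < Suc n"
  shows "(adjacent_sum_mat n * A) $$ (i,j) = A $$ (i,j) + (if i < n then A $$ (i+1,j) else 0)"
proof -
  have "(adjacent_sum_mat n * A) $$ (i,j) = (\<Sum>s<Suc n. adjacent_sum_mat n $$ (i,s) * A $$ (s,j))"
    using assms by (simp add: adjacent_sum_mat_def scalar_prod_def lessThan_atLeast0)
  also have "\<dots> = (\<Sum>s<Suc n. (if s = i then A $$ (i,j) else 0) + (if s = i+1 then A $$ (i+1,j) else 0))"
    by (rule sum.cong) (use assms in \<open>auto simp: adjacent_sum_mat_def\<close>)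
  also have "\<dots> = A $$ (i,j) + (if i < n then A $$ (i+1,j) else 0)"
    using assms by (simp add: sum.distrib sum.delta)
  finally show ?thesis .
qed

text \<open>Adding row \<open>i+1\<close> to row \<open>i\<close> for all \<open>i < n\<close> clears the border column except for its
  last entry \<open>(-1)^n\<close>.\<close>

lemma det_bordered_mat_eq_det_adjacent_sum:
  "det (bordered_mat n F) = det (mat n n (\<lambda>(i,j). F (i,j) + F (i+1,j)))"
proof -
  define A where "A = bordered_mat n F"
  define EA where "EA = adjacent_sum_mat n * A"
  have A: "A \<in> carrier_mat (Suc n) (Suc n)" unfolding A_def bordered_mat_def by auto
  have E: "adjacent_sum_mat n \<in> carrier_mat (Suc n) (Suc n)" unfolding adjacent_sum_mat_def by auto
  have EA: "EA \<in> carrier_mat (Suc n) (Suc n)" using E A unfolding EA_def by simp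
  have EA_border: "EA $$ (i,0) = (if i = n then (-1)^n else 0)" if "i < Suc n" for i
    using that adjacent_sum_mat_mult_index[OF A that] unfolding EA_def A_def bordered_mat_def by auto
  have EA_inner: "EA $$ (i, Suc j) = F (i,j) + F (i+1,j)" if "i < n" "j < n" for i j
    using that adjacent_sum_mat_mult_index[OF A, of i "Suc j"] unfolding EA_def A_def bordered_mat_def by auto
  have "det A = det EA"
    using det_mult[OF E A] det_adjacent_sum_mat unfolding EA_def by simp
  also have "\<dots> = (\<Sum>i<Suc n. EA $$ (i,0) * cofactor EA i 0)"
    by (rule laplace_expansion_column[OF EA]) simp
  also have "\<dots> = (\<Sum>i<Suc n. if i = n then (-1)^n * cofactor EA n 0 else 0)"
    by (rule sum.cong) (auto simp: EA_border)
  also have "\<dots> = (-1)^n * cofactor EA n 0" by (simp add: sum.delta)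
  also have "\<dots> = det (mat_delete EA n 0)"
    unfolding cofactor_def by (simp flip: power_add)
  also have "mat_delete EA n 0 = mat n n (\<lambda>(i,j). F (i,j) + F (i+1,j))"
    by (rule eq_matI) (use EA in \<open>auto simp: mat_delete_def EA_inner\<close>)
  finally show ?thesis unfolding A_def .
qed

lemma det_mat_add_adjacent_rows:
  fixes F :: "nat \<times> nat \<Rightarrow> real"
  shows "det (mat n n (\<lambda>(i,j). F (i,j) + F (i+1,j))) = (\<Sum>s\<le>n. det (mat n n (\<lambda>(i,j). F (skip s i, j))))"
  using det_bordered_mat_eq_det_adjacent_sum[of n F] det_bordered_mat_eq_sum[of n F] by (rule subst)

lemma prod_atMost_remove:
  assumes "s \<le> n"
  shows "(\<Prod>i\<le>n. h i) = h s * (\<Prod>i<n. h (skip s i))"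
proof -
  have "inj_on (skip s) {..<n}" by (auto simp: inj_on_def)
  moreover have "skip s ` {..<n} = {..n} - {s}"
  proof
    show "{..n} - {s} \<subseteq> skip s ` {..<n}"
    proof
      fix x assume x: "x \<in> {..n} - {s}"
      show "x \<in> skip s ` {..<n}"
      proof (cases "x < s")
        case True
        then show ?thesis using x assms by (auto intro!: image_eqI[of _ _ x])
      next
        case False
        then show ?thesis using x assms by (auto intro!: image_eqI[of _ _ "x - 1"])
      qed
    qed
  qed auto
  ultimately have "(\<Prod>i\<in>{..n} - {s}. h i) = (\<Prod>i<n. h (skip s i))"
    by (metis (no_types, lifting) prod.reindex_cong)
  moreover have "(\<Prod>i\<le>n. h i) = h s * (\<Prod>i\<in>{..n} - {s}. h i)"
    by (rule prod.remove) (use assms in auto)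
  ultimately show ?thesis by simp
qed

lemma prod_vandermonde_remove:
  fixes x :: "nat \<Rightarrow> real"
  assumes "s \<le> n"
  shows "(\<Prod>j\<le>n. \<Prod>i<j. x j - x i)
       = (\<Prod>j<n. \<Prod>i<j. x (skip s j) - x (skip s i)) * ((\<Prod>i<s. x s - x i) * (\<Prod>j\<in>{s+1..n}. x j - x s))"
proof -
  define f where "f = (\<lambda>(j,i). x j - x (i::nat))"
  define S where "S = (SIGMA j:{..n}. {..<j})"
  define U where "U = {p \<in> S. fst p = s \<or> snd p = s}"
  define unskip where "unskip = (\<lambda>i::nat. if i < s then i else i - 1)"
  have "(\<Prod>j\<le>n. \<Prod>i<j. x j - x i) = prod f S"
    unfolding S_def f_def by (subst prod.Sigma) auto
  also have "\<dots> = prod f (S - U) * prod f U"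
    by (rule prod.subset_diff) (auto simp: U_def S_def)
  also have "prod f (S - U) = (\<Prod>j<n. \<Prod>i<j. x (skip s j) - x (skip s i))"
  proof -
    have "prod f (S - U) = prod (\<lambda>(j,i). f (skip s j, skip s i)) (SIGMA j:{..<n}. {..<j})"
      by (rule prod.reindex_bij_witness[of _ "\<lambda>(j,i). (skip s j, skip s i)" "\<lambda>(j,i). (unskip j, unskip i)"])
        (use assms in \<open>auto simp: S_def U_def unskip_def split: if_splits\<close>)
    also have "\<dots> = (\<Prod>j<n. \<Prod>i<j. x (skip s j) - x (skip s i))"
      unfolding f_def by (subst prod.Sigma) auto
    finally show ?thesis .
  qed
  also have "prod f U = (\<Prod>i<s. x s - x i) * (\<Prod>j\<in>{s+1..n}. x j - x s)"
  proof -
    have U: "U = Pair s ` {..<s} \<union> (\<lambda>j. (j,s)) ` {s+1..n}"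
      using assms by (auto simp: U_def S_def image_iff)
    have "prod f U = prod f (Pair s ` {..<s}) * prod f ((\<lambda>j. (j,s)) ` {s+1..n})"
      unfolding U by (rule prod.union_disjoint) auto
    also have "\<dots> = (\<Prod>i<s. x s - x i) * (\<Prod>j\<in>{s+1..n}. x j - x s)"
      by (simp add: prod.reindex inj_on_def f_def)
    finally show ?thesis .
  qed
  finally show ?thesis .
qed

lemma det_gen_catalan_mat_skip:
  assumes k: "k \<ge> 2" and \<beta>: "\<beta> \<le> k - 1" and inj: "inj_on \<alpha> {..n}" and s: "s \<le> n"
  shows "det (mat n n (\<lambda>(i,j). gen_catalan ((k-1) * \<alpha> (skip s i) + j + \<beta>) k))
       = (\<Prod>j\<in>{..n}. \<Prod>i<j. (real (\<alpha> j) - real (\<alpha> i))) * catalan_det_const k \<beta> n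
         * (\<Prod>i\<in>{..n}. row_factor k \<beta> n (\<alpha> i))
         * (fact (\<alpha> s) * fact ((k - 1) * \<alpha> s + \<beta> + n)
             / (fact (k * \<alpha> s + \<beta>)
                * (\<Prod>j<s. (real (\<alpha> s) - real (\<alpha> j)))
                * (\<Prod>j\<in>{s+1..n}. (real (\<alpha> j) - real (\<alpha> s)))))"
proof -
  have "\<alpha> j \<noteq> \<alpha> s" if "j \<le> n" "j \<noteq> s" for j
    using inj_onD[OF inj, of j s] s that by auto
  then have "(\<Prod>j<s. real (\<alpha> s) - real (\<alpha> j)) \<noteq> 0" "(\<Prod>j\<in>{s+1..n}. real (\<alpha> j) - real (\<alpha> s)) \<noteq> 0"
    using s by (auto simp: eq_commute[of "\<alpha> s"])
  moreover have "row_factor k \<beta> n (\<alpha> s) \<noteq> 0" unfolding row_factor_def by simp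
  moreover have "fact (\<alpha> s) * fact ((k - 1) * \<alpha> s + \<beta> + n) / fact (k * \<alpha> s + \<beta>)
               = 1 / row_factor k \<beta> n (\<alpha> s)"
    unfolding row_factor_def by simp
  ultimately show ?thesis
    unfolding det_gen_catalan_mat[OF k \<beta>] prod_vandermonde_remove[OF s]
      prod_atMost_remove[OF s, of "\<lambda>i. row_factor k \<beta> n (\<alpha> i)"]
    by (simp add: field_simps)
qed

theorem corollary7:
  fixes n k \<beta> :: nat and \<alpha> :: "nat \<Rightarrow> nat"
  assumes "n \<ge> 1" and "k \<ge> 2" and "\<beta> \<le> k - 1"
    and "inj_on \<alpha> {..n}"
  shows "det (mat n n (\<lambda>(i, j).
            gen_catalan ((k - 1) * \<alpha> i + j + \<beta>) k + gen_catalan ((k - 1) * \<alpha> (i + 1) + j + \<beta>) k))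
    = (\<Prod>j\<in>{..n}. \<Prod>i<j. (real (\<alpha> j) - real (\<alpha> i)))
      * (\<Prod>i<n. fact ((k - 1) * i + \<beta> + n) / fact (k * i + \<beta>))
      * (\<Prod>i\<in>{..n}. fact (k * \<alpha> i + \<beta>) / (fact (\<alpha> i) * fact ((k - 1) * \<alpha> i + \<beta> + n)))
      * (\<Sum>s\<in>{..n}. fact (\<alpha> s) * fact ((k - 1) * \<alpha> s + \<beta> + n)
           / (fact (k * \<alpha> s + \<beta>)
              * (\<Prod>j<s. (real (\<alpha> s) - real (\<alpha> j)))
              * (\<Prod>j\<in>{s+1..n}. (real (\<alpha> j) - real (\<alpha> s)))))"
proof -
  let ?term = "\<lambda>s. fact (\<alpha> s) * fact ((k - 1) * \<alpha> s + \<beta> + n)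
           / (fact (k * \<alpha> s + \<beta>)
              * (\<Prod>j<s. (real (\<alpha> s) - real (\<alpha> j)))
              * (\<Prod>j\<in>{s+1..n}. (real (\<alpha> j) - real (\<alpha> s))))"
  have "det (mat n n (\<lambda>(i, j).
            gen_catalan ((k - 1) * \<alpha> i + j + \<beta>) k + gen_catalan ((k - 1) * \<alpha> (i + 1) + j + \<beta>) k))
      = (\<Sum>s\<le>n. det (mat n n (\<lambda>(i,j). gen_catalan ((k-1) * \<alpha> (skip s i) + j + \<beta>) k)))"
    using det_mat_add_adjacent_rows[of n "\<lambda>(i,j). gen_catalan ((k - 1) * \<alpha> i + j + \<beta>) k"] by simp
  also have "\<dots> = (\<Sum>s\<le>n. (\<Prod>j\<in>{..n}. \<Prod>i<j. (real (\<alpha> j) - real (\<alpha> i)))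
                         * catalan_det_const k \<beta> n * (\<Prod>i\<in>{..n}. row_factor k \<beta> n (\<alpha> i)) * ?term s)"
    by (intro sum.cong refl det_gen_catalan_mat_skip[OF assms(2-4)]) simp
  finally show ?thesis
    unfolding sum_distrib_left[symmetric] catalan_det_const_def row_factor_def by (simp only: mult_ac)
qed

end
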